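(* Let $S$ be a stacked $2$-sphere and let $\alpha=abc$ and $\beta=abd$ be two triangles of $S$, with $\overline{\alpha}$ (resp. $\overline{\beta}$) the unique tetrahedron of $\overline{S}$ containing $\alpha$ (resp. $\beta$). (a) If $\overline{\alpha}$ and $\overline{\beta}$ are adjacent nodes of the dual graph $\Lambda(\overline{S})$, then $cd$ is not an edge of $S$ and the triangulated $2$-sphere $T$ obtained from $S$ by the edge flip $ab\mapsto cd$ is stacked. (b) Conversely, if $cd$ is not an edge of $S$ and the $2$-sphere $T$ obtained by the edge flip $ab\mapsto cd$ is stacked, then $\overline{\alpha}$ and $\overline{\beta}$ are adjacent in $\Lambda(\overline{S})$.
   Context: A triangulated $2$-sphere is a finite simplicial complex whose geometric realization is homeomorphic to the $2$-sphere. Edge flip $ab\mapsto cd$: if $abc,abd$ are triangles and $cd$ is not an edge, replace $abc,abd$ by $acd,bcd$. A stacked $3$-ball is a simplicial complex obtained from a single tetrahedron (with its faces) by repeatedly gluing a new tetrahedron along exactly one triangle of the boundary, introducing one new vertex each time. A stacked $2$-sphere is a triangulated $2$-sphere isomorphic to the boundary of a stacked $3$-ball. For a stacked $2$-sphere $S$, $\overline{S}$ denotes the simplicial complex whose faces are all cliques of the edge graph of $S$; it is known that $\overline{S}$ is a stacked $3$-ball with boundary $S$, and that it is, up to isomorphism, the unique stacked $3$-ball with boundary $S$. Each triangle $\alpha$ of $S$ lies in a unique tetrahedron $\overline{\alpha}$ of $\overline{S}$. The dual graph $\Lambda(C)$ of a complex $C$ made of tetrahedra has the tetrahedra as nodes,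 two nodes being adjacent iff the tetrahedra share a triangle; for a stacked $3$-ball it is a tree with node degrees at most $4$. *)

theory Defs
  imports Main
begin

text \<open>Pure 3-dimensional complexes are represented by their set of tetrahedra
(4-element vertex sets); 2-dimensional complexes (2-spheres) by their set of
triangles (3-element vertex sets). Lower faces are implicit (all subsets).\<close>

definition boundary_tris :: "'a set set \<Rightarrow> 'a set set" where
  "boundary_tris B = {t. card t = 3 \<and> card {s \<in> B. t \<subseteq> s} = 1}"

inductive stacked_ball :: "'a set set \<Rightarrow> bool" where
  single: "card s = 4 \<Longrightarrow> stacked_ball {s}"
| glue: "stacked_ball B \<Longrightarrow> t \<in> boundary_tris B \<Longrightarrow> v \<notin> \<Union>B
         \<Longrightarrow> stacked_ball (insert (insert v t) B)"

definition stacked_sphere :: "'a set set \<Rightarrow> bool" where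
  "stacked_sphere S \<longleftrightarrow> (\<exists>(B :: 'a set set) (f :: 'a \<Rightarrow> 'a). stacked_ball B \<and> inj_on f (\<Union>B)
       \<and> (\<lambda>t. f ` t) ` boundary_tris B = S)"

definition edges2 :: "'a set set \<Rightarrow> 'a set set" where
  "edges2 S = {e. card e = 2 \<and> (\<exists>t\<in>S. e \<subseteq> t)}"

definition clique_tets :: "'a set set \<Rightarrow> 'a set set" where
  "clique_tets S = {s. card s = 4 \<and> (\<forall>x\<in>s. \<forall>y\<in>s. x \<noteq> y \<longrightarrow> {x, y} \<in> edges2 S)}"

definition tet_of :: "'a set set \<Rightarrow> 'a set \<Rightarrow> 'a set" where
  "tet_of S t = (THE s. s \<in> clique_tets S \<and> t \<subseteq> s)"

definition dual_adj :: "'a set set \<Rightarrow> 'a set \<Rightarrow> 'a set \<Rightarrow> bool" where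
  "dual_adj C s s' \<longleftrightarrow> s \<in> C \<and> s' \<in> C \<and> s \<noteq> s' \<and> card (s \<inter> s') = 3"

definition edge_flip :: "'a set set \<Rightarrow> 'a \<Rightarrow> 'a \<Rightarrow> 'a \<Rightarrow> 'a \<Rightarrow> 'a set set" where
  "edge_flip S a b c d = (S - {{a, b, c}, {a, b, d}}) \<union> {{a, c, d}, {b, c, d}}"

end

theory Submission
  imports Defs
begin

text \<open>A stacked ball \<open>B\<close> is recovered from its boundary \<open>S\<close>: its tetrahedra are exactly the
  4-cliques of the edge graph of \<open>S\<close>. Hence the tetrahedra of \<open>B\<close> on \<open>abc\<close> and \<open>abd\<close> are
  \<open>abcx\<close> and \<open>abdy\<close>, adjacent in the dual graph iff \<open>x = y\<close>.
  If \<open>x = y\<close>, then \<open>cd\<close> is not an edge (else \<open>abcd\<close> would be a second tetrahedron on \<open>abc\<close>), and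
  replacing \<open>abcx, abdx\<close> by \<open>acdx, bcdx\<close> gives a stacked ball bounded by the flipped sphere,
  as one checks along the gluing sequence of \<open>B\<close>.
  If \<open>x \<noteq> y\<close>, the flipped sphere contains the square \<open>a x b d\<close> without diagonals, which the
  edge graph of a stacked ball cannot contain.\<close>

lemma card3_subset_eq: "card u = 3 \<Longrightarrow> card t = 3 \<Longrightarrow> u \<subseteq> t \<Longrightarrow> u = t"
  by (metis card_subset_eq card_ge_0_finite zero_less_numeral)

lemma card3_eq_insert_of_card2:
  assumes "card u = 3" "e \<subseteq> u" "card e = 2"
  shows "\<exists>z\<in>u - e. u = insert z e"
proof -
  have fu: "finite u" using assms(1) by (intro card_ge_0_finite) simp
  have "e \<noteq> u" using assms by auto
  then obtain z where z: "z \<in> u" "z \<notin> e" using assms(2) by blast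
  have "finite e" using fu assms(2) finite_subset by blast
  then have "card (insert z e) = 3" using z assms(3) by simp
  then have "insert z e = u" using assms(1,2) z card3_subset_eq by blast
  then show ?thesis using z by blast
qed

lemma card3_subset_card4:
  assumes "distinct [p,q,r,w]" "card u = 3" "u \<subseteq> {p,q,r,w}"
  shows "u = {p,q,r} \<or> u = {p,q,w} \<or> u = {p,r,w} \<or> u = {q,r,w}"
proof -
  have "\<not> {p,q,r,w} \<subseteq> u"
  proof
    assume "{p,q,r,w} \<subseteq> u"
    then have "card {p,q,r,w} \<le> card u" using assms(2) by (intro card_mono) (auto intro: card_ge_0_finite)
    then show False using assms(1,2) by simp
  qed
  then obtain z where z: "z \<in> {p,q,r,w}" "z \<notin> u" by blast
  then have "u \<subseteq> {p,q,r,w} - {z}" using assms(3) by auto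
  moreover have "card ({p,q,r,w} - {z}) = 3" using assms(1) z by (simp add: card_Diff_singleton)
  ultimately have "u = {p,q,r,w} - {z}" using assms(2) card3_subset_eq by blast
  moreover have "z = p \<or> z = q \<or> z = r \<or> z = w" using z(1) by auto
  moreover have "{p,q,r,w} - {p} = {q,r,w}" "{p,q,r,w} - {q} = {p,r,w}"
    "{p,q,r,w} - {r} = {p,q,w}" "{p,q,r,w} - {w} = {p,q,r}" using assms(1) by auto
  ultimately show ?thesis by metis
qed

lemma card4_edge_in_two_tris:
  assumes "card A = 4" "card e = 2" "e \<subseteq> A"
    and "\<And>u. u \<in> {u1, u2, u3} \<Longrightarrow> card u = 3 \<and> e \<subseteq> u \<and> u \<subseteq> A"
  shows "u1 = u2 \<or> u1 = u3 \<or> u2 = u3"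
proof -
  have fA: "finite A" using assms(1) by (intro card_ge_0_finite) simp
  have apex: "\<exists>z\<in>A - e. u = insert z e" if "u \<in> {u1, u2, u3}" for u
    using card3_eq_insert_of_card2[of u e] assms(2) assms(4)[OF that] by blast
  obtain z1 where z1: "z1 \<in> A - e" "u1 = insert z1 e" using apex[of u1] by blast
  obtain z2 where z2: "z2 \<in> A - e" "u2 = insert z2 e" using apex[of u2] by blast
  obtain z3 where z3: "z3 \<in> A - e" "u3 = insert z3 e" using apex[of u3] by blast
  have "card (A - e) = 2" using assms(1-3) fA by (simp add: card_Diff_subset finite_subset)
  then have "card {z1, z2, z3} \<le> 2"
    using card_mono[of "A - e" "{z1, z2, z3}"] z1 z2 z3 fA by auto
  then have "z1 = z2 \<or> z1 = z3 \<or> z2 = z3" by (auto simp: card_insert_if split: if_splits)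
  then show ?thesis using z1 z2 z3 by auto
qed

lemma card4_eq_insert_of_card3:
  assumes "card s = 4" "u \<subseteq> s" "card u = 3"
  obtains x where "x \<notin> u" "s = insert x u"
proof -
  have "finite s" using assms(1) by (intro card_ge_0_finite) simp
  then have "card (s - u) = 1" using assms by (simp add: card_Diff_subset finite_subset)
  then obtain x where "s - u = {x}" by (rule card_1_singletonE)
  then show ?thesis using that assms(2) by blast
qed

section \<open>Counting the tetrahedra on a face\<close>

definition cofaces_count :: "'a set set \<Rightarrow> 'a set \<Rightarrow> nat" where
  "cofaces_count B u = card {s \<in> B. u \<subseteq> s}"

lemma boundary_tris_iff: "u \<in> boundary_tris B \<longleftrightarrow> card u = 3 \<and> cofaces_count B u = 1"
  by (simp add: boundary_tris_def cofaces_count_def)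

lemma cofaces_count_insert:
  assumes "finite B" "N \<notin> B"
  shows "cofaces_count (insert N B) u = cofaces_count B u + (if u \<subseteq> N then 1 else 0)"
proof (cases "u \<subseteq> N")
  case True
  then have "{s \<in> insert N B. u \<subseteq> s} = insert N {s \<in> B. u \<subseteq> s}" by auto
  then show ?thesis using assms True by (simp add: cofaces_count_def)
next
  case False
  then have "{s \<in> insert N B. u \<subseteq> s} = {s \<in> B. u \<subseteq> s}" by auto
  then show ?thesis using False by (simp add: cofaces_count_def)
qed

lemma cofaces_count_remove:
  "finite B \<Longrightarrow> s \<in> B \<Longrightarrow> cofaces_count B u = cofaces_count (B - {s}) u + (if u \<subseteq> s then 1 else 0)"
  using cofaces_count_insert[of "B - {s}" s u] by (simp add: insert_absorb)

lemma cofaces_count_eq_0: "\<forall>s\<in>B. \<not> u \<subseteq> s \<Longrightarrow> cofaces_count B u = 0"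
  unfolding cofaces_count_def by (metis (mono_tags, lifting) card.empty empty_Collect_eq)

lemma boundary_tri_in_tet: "u \<in> boundary_tris B \<Longrightarrow> \<exists>s\<in>B. u \<subseteq> s"
  unfolding boundary_tris_def by (metis (mono_tags, lifting) card.empty empty_Collect_eq mem_Collect_eq zero_neq_one)

lemma boundary_tri_tet_unique:
  assumes "u \<in> boundary_tris B" "s1 \<in> B" "s2 \<in> B" "u \<subseteq> s1" "u \<subseteq> s2"
  shows "s1 = s2"
proof -
  have "card {s' \<in> B. u \<subseteq> s'} = 1" using assms(1) by (simp add: boundary_tris_def)
  then obtain s where s: "{s' \<in> B. u \<subseteq> s'} = {s}" by (rule card_1_singletonE)
  have "s1 \<in> {s' \<in> B. u \<subseteq> s'}" "s2 \<in> {s' \<in> B. u \<subseteq> s'}" using assms(2-) by auto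
  then show ?thesis unfolding s by simp
qed

lemma boundary_tris_subset:
  assumes "u \<in> boundary_tris B" "B' \<subseteq> B" "s \<in> B'" "u \<subseteq> s"
  shows "u \<in> boundary_tris B'"
proof -
  have "{s' \<in> B'. u \<subseteq> s'} = {s}" using boundary_tri_tet_unique[OF assms(1)] assms by auto
  then show ?thesis using assms(1) by (simp add: boundary_tris_def)
qed

lemma stacked_ball_finite: "stacked_ball B \<Longrightarrow> finite B"
  by (induction rule: stacked_ball.induct) auto

lemma glue_nondegenerate:
  assumes "t \<in> boundary_tris B" "v \<notin> \<Union>B"
  shows "card t = 3 \<and> finite t \<and> v \<notin> t \<and> insert v t \<notin> B"
proof -
  have "card t = 3" using assms(1) by (simp add: boundary_tris_def)
  moreover from this have "finite t" by (intro card_ge_0_finite) simp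
  ultimately show ?thesis using boundary_tri_in_tet[OF assms(1)] assms(2) by auto
qed

lemma stacked_ball_card_tet: "stacked_ball B \<Longrightarrow> s \<in> B \<Longrightarrow> card s = 4"
proof (induction arbitrary: s rule: stacked_ball.induct)
  case (glue B t v)
  then show ?case using glue_nondegenerate[OF glue(2,3)] by auto
qed simp

lemma boundary_tris_glue:
  assumes "finite B" "t \<in> boundary_tris B" "v \<notin> \<Union>B"
  shows "u \<in> boundary_tris (insert (insert v t) B) \<longleftrightarrow>
    (u \<in> boundary_tris B \<and> u \<noteq> t) \<or> (card u = 3 \<and> v \<in> u \<and> u \<subseteq> insert v t)"
proof -
  note nd = glue_nondegenerate[OF assms(2,3)]
  have count: "cofaces_count (insert (insert v t) B) u = cofaces_count B u + (if u \<subseteq> insert v t then 1 else 0)"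
    using cofaces_count_insert[OF assms(1)] nd by blast
  show ?thesis
  proof (cases "v \<in> u")
    case True
    then have "cofaces_count B u = 0" using assms(3) by (intro cofaces_count_eq_0) auto
    then show ?thesis using count True by (auto simp: boundary_tris_iff)
  next
    case False
    then have "card u = 3 \<and> u \<subseteq> insert v t \<longleftrightarrow> u = t" using nd card3_subset_eq by blast
    then show ?thesis using count False assms(2) by (auto simp: boundary_tris_iff)
  qed
qed

lemma stacked_ball_cofaces_count_le_2: "stacked_ball B \<Longrightarrow> card u = 3 \<Longrightarrow> cofaces_count B u \<le> 2"
proof (induction rule: stacked_ball.induct)
  case (single s)
  have "{s' \<in> {s}. u \<subseteq> s'} \<subseteq> {s}" by auto
  then have "card {s' \<in> {s}. u \<subseteq> s'} \<le> 1" using card_mono[of "{s}"] by fastforce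
  then show ?case by (simp add: cofaces_count_def)
next
  case (glue B t v)
  note nd = glue_nondegenerate[OF glue(2,3)]
  have count: "cofaces_count (insert (insert v t) B) u = cofaces_count B u + (if u \<subseteq> insert v t then 1 else 0)"
    using cofaces_count_insert[OF stacked_ball_finite[OF glue(1)]] nd by blast
  consider "\<not> u \<subseteq> insert v t" | "v \<in> u" | "u = t"
    using nd glue.prems card3_subset_eq by (metis subset_insert)
  then show ?case
  proof cases
    case 2
    then have "cofaces_count B u = 0" using glue(3) by (intro cofaces_count_eq_0) auto
    then show ?thesis using count by simp
  qed (use count glue in \<open>auto simp: boundary_tris_iff\<close>)
qed

section \<open>The edge graph of a stacked ball\<close>

lemma stacked_ball_edge_in_boundary_tri:
  "stacked_ball B \<Longrightarrow> s \<in> B \<Longrightarrow> e \<subseteq> s \<Longrightarrow> card e = 2 \<Longrightarrow> \<exists>u\<in>boundary_tris B. e \<subseteq> u"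
proof (induction arbitrary: s rule: stacked_ball.induct)
  case (single s0)
  have fin: "finite s0" using single(1) by (intro card_ge_0_finite) simp
  have "e \<noteq> s0" using single by auto
  then obtain z where z: "z \<in> s0" "z \<notin> e" using single by auto
  have "card (insert z e) = 3" using z single fin finite_subset by fastforce
  moreover have "{s' \<in> {s0}. insert z e \<subseteq> s'} = {s0}" using z single by auto
  ultimately have "insert z e \<in> boundary_tris {s0}" by (simp add: boundary_tris_def)
  then show ?case by blast
next
  case (glue B t v)
  note nd = glue_nondegenerate[OF glue(2,3)]
  note bd = boundary_tris_glue[OF stacked_ball_finite[OF glue(1)] glue(2,3)]
  have fin_e: "finite e" using glue.prems(3) by (intro card_ge_0_finite) simp
  have apex: "insert v e \<in> boundary_tris (insert (insert v t) B)" if "v \<notin> e" "e \<subseteq> t"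
    using bd that fin_e glue.prems(3) by auto
  show ?case
  proof (cases "s \<in> B")
    case True
    then obtain u where u: "u \<in> boundary_tris B" "e \<subseteq> u" using glue by blast
    show ?thesis
    proof (cases "u = t")
      case True
      then show ?thesis using apex u nd by blast
    qed (use u bd in blast)
  next
    case False
    then have s: "s = insert v t" using glue.prems(1) by simp
    show ?thesis
    proof (cases "v \<in> e")
      case True
      have "e \<noteq> insert v t" using nd glue.prems(3) by auto
      then obtain z where "z \<in> insert v t" "z \<notin> e" using glue.prems(2) s by blast
      then have "insert z e \<in> boundary_tris (insert (insert v t) B)"
        using bd True glue.prems(2,3) s fin_e by auto
      then show ?thesis by blast
    next
      case False
      then show ?thesis using apex glue.prems(2) s by blast
    qed
  qed
qed

lemma stacked_ball_clique_mem:
  "stacked_ball B \<Longrightarrow> card K = 4 \<Longrightarrow> \<forall>x\<in>K. \<forall>y\<in>K. x \<noteq> y \<longrightarrow> (\<exists>s\<in>B. {x,y} \<subseteq> s) \<Longrightarrow> K \<in> B"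
proof (induction arbitrary: K rule: stacked_ball.induct)
  case (single s)
  have sub: "K \<subseteq> s"
  proof
    fix x assume x: "x \<in> K"
    have "card (K - {x}) = 3" using single(2) x by simp
    then have "K - {x} \<noteq> {}" by (metis card.empty zero_neq_numeral)
    then obtain y where "y \<in> K" "y \<noteq> x" by blast
    then show "x \<in> s" using single(3) x by auto
  qed
  have "finite s" using single(1) by (intro card_ge_0_finite) simp
  then have "K = s" using card_subset_eq[OF _ sub] single(1,2) by simp
  then show ?case by simp
next
  case (glue B t v)
  note nd = glue_nondegenerate[OF glue(2,3)]
  show ?case
  proof (cases "v \<in> K")
    case True
    have sub: "K \<subseteq> insert v t"
    proof
      fix y assume y: "y \<in> K"
      show "y \<in> insert v t"
      proof (cases "y = v")
        case False
        then obtain s where "s \<in> insert (insert v t) B" "{v,y} \<subseteq> s"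
          using glue.prems(2)[rule_format, OF True y] by blast
        then show ?thesis using glue(3) by auto
      qed simp
    qed
    have "card (insert v t) = 4" "finite (insert v t)" using nd by auto
    then have "K = insert v t" using card_subset_eq[OF _ sub] glue.prems(1) by simp
    then show ?thesis by simp
  next
    case False
    obtain s0 where s0: "s0 \<in> B" "t \<subseteq> s0" using boundary_tri_in_tet[OF glue(2)] by blast
    have "\<forall>x\<in>K. \<forall>y\<in>K. x \<noteq> y \<longrightarrow> (\<exists>s\<in>B. {x,y} \<subseteq> s)"
    proof (intro ballI impI)
      fix x y assume xy: "x \<in> K" "y \<in> K" "x \<noteq> y"
      obtain s where s: "s \<in> insert (insert v t) B" "{x,y} \<subseteq> s"
        using glue.prems(2)[rule_format, OF xy] by blast
      show "\<exists>s\<in>B. {x,y} \<subseteq> s"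
      proof (cases "s \<in> B")
        case False
        then have "{x,y} \<subseteq> t" using s xy \<open>v \<notin> K\<close> by auto
        then show ?thesis using s0 by blast
      qed (use s in blast)
    qed
    then show ?thesis using glue.IH[OF glue.prems(1)] by blast
  qed
qed

lemma stacked_ball_square_chord:
  "stacked_ball B \<Longrightarrow> p \<noteq> r \<Longrightarrow> q \<noteq> w \<Longrightarrow>
   \<exists>s\<in>B. {p,q} \<subseteq> s \<Longrightarrow> \<exists>s\<in>B. {q,r} \<subseteq> s \<Longrightarrow> \<exists>s\<in>B. {r,w} \<subseteq> s \<Longrightarrow> \<exists>s\<in>B. {w,p} \<subseteq> s
   \<Longrightarrow> \<not> (\<exists>s\<in>B. {p,r} \<subseteq> s) \<Longrightarrow> \<exists>s\<in>B. {q,w} \<subseteq> s"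
proof (induction arbitrary: p q r w rule: stacked_ball.induct)
  case (single s)
  show ?case using single.prems(3,5) by auto
next
  case (glue B t v)
  obtain s0 where s0: "s0 \<in> B" "t \<subseteq> s0" using boundary_tri_in_tet[OF glue(2)] by blast
  let ?N = "insert v t"
  have old_edge: "\<exists>s\<in>B. {x,y} \<subseteq> s"
    if edge: "\<exists>s\<in>insert ?N B. {x,y} \<subseteq> s" and fresh: "v \<noteq> x" "v \<noteq> y" for x y
  proof -
    obtain s where s: "s \<in> insert ?N B" "{x,y} \<subseteq> s" using edge by blast
    show ?thesis
    proof (cases "s = ?N")
      case True
      then have "{x,y} \<subseteq> s0" using s(2) fresh s0(2) by auto
      then show ?thesis using s0(1) by blast
    qed (use s in blast)
  qed
  have new_nbr: "{x,y} \<subseteq> ?N"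
    if edge: "\<exists>s\<in>insert ?N B. {x,y} \<subseteq> s" and v: "x = v \<or> y = v" for x y
  proof -
    obtain s where s: "s \<in> insert ?N B" "{x,y} \<subseteq> s" using edge by blast
    have "v \<in> s" using s(2) v by auto
    then have "s = ?N" using s(1) glue(3) by blast
    then show ?thesis using s(2) by simp
  qed
  have new_edge: "\<exists>s\<in>insert ?N B. {x,y} \<subseteq> s" if "x \<in> ?N" "y \<in> ?N" for x y
    using that by (intro bexI[of _ ?N]) auto
  show ?case
  proof (cases "v \<in> {p,q,r,w}")
    case False
    have "\<exists>s\<in>B. {q,w} \<subseteq> s"
      using glue.IH[of p r q w] glue.prems(1,2,7) old_edge[OF glue.prems(3)] old_edge[OF glue.prems(4)]
        old_edge[OF glue.prems(5)] old_edge[OF glue.prems(6)] False by auto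
    then show ?thesis by auto
  next
    case True
    then consider "v = p" | "v = r" | "v = q" | "v = w" by auto
    then show ?thesis
    proof cases
      case 1
      then have "{p,q} \<subseteq> ?N" "{w,p} \<subseteq> ?N"
        using new_nbr[OF glue.prems(3)] new_nbr[OF glue.prems(6)] by auto
      then show ?thesis by (intro new_edge) auto
    next
      case 2
      then have "{q,r} \<subseteq> ?N" "{r,w} \<subseteq> ?N"
        using new_nbr[OF glue.prems(4)] new_nbr[OF glue.prems(5)] by auto
      then show ?thesis by (intro new_edge) auto
    next
      case 3
      then have "{p,q} \<subseteq> ?N" "{q,r} \<subseteq> ?N"
        using new_nbr[OF glue.prems(3)] new_nbr[OF glue.prems(4)] by auto
      then show ?thesis using glue.prems(7) new_edge[of p r] by auto
    next
      case 4
      then have "{r,w} \<subseteq> ?N" "{w,p} \<subseteq> ?N"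
        using new_nbr[OF glue.prems(5)] new_nbr[OF glue.prems(6)] by auto
      then show ?thesis using glue.prems(7) new_edge[of p r] by auto
    qed
  qed
qed

lemma stacked_ball_edge_in_two_boundary_tris:
  "stacked_ball B \<Longrightarrow> card e = 2 \<Longrightarrow> u1 \<in> boundary_tris B \<Longrightarrow> u2 \<in> boundary_tris B \<Longrightarrow>
   u3 \<in> boundary_tris B \<Longrightarrow> e \<subseteq> u1 \<Longrightarrow> e \<subseteq> u2 \<Longrightarrow> e \<subseteq> u3 \<Longrightarrow> u1 = u2 \<or> u1 = u3 \<or> u2 = u3"
proof (induction arbitrary: u1 u2 u3 rule: stacked_ball.induct)
  case (single s)
  have tri: "u \<subseteq> s" "card u = 3" if "u \<in> boundary_tris {s}" for u
    using that boundary_tri_in_tet[of u "{s}"] by (auto simp: boundary_tris_def)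
  show ?case
  proof (rule card4_edge_in_two_tris[of s e])
    show "e \<subseteq> s" using tri single(3,6) by blast
  qed (use tri single in auto)
next
  case (glue B t v)
  let ?B' = "insert (insert v t) B"
  note nd = glue_nondegenerate[OF glue(2,3)]
  note bd = boundary_tris_glue[OF stacked_ball_finite[OF glue(1)] glue(2,3)]
  have tri: "card u = 3" if "u \<in> boundary_tris ?B'" for u
    using that by (simp add: boundary_tris_def)
  show ?case
  proof (cases "v \<in> e")
    case True
    have sub: "u \<subseteq> insert v t" if "u \<in> boundary_tris ?B'" "e \<subseteq> u" for u
      using that True bd boundary_tri_in_tet[of u B] glue(3) by blast
    show ?thesis
    proof (rule card4_edge_in_two_tris[of "insert v t" e])
      show "card (insert v t) = 4" using nd by simp
      show "e \<subseteq> insert v t" using sub glue.prems(2,5) by blast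
    qed (use sub tri glue.prems in auto)
  next
    case False
    txt \<open>Boundary triangles of the glued ball through \<open>e\<close> correspond injectively to those
      of \<open>B\<close>: the new triangle \<open>insert v e\<close> replaces \<open>t\<close>.\<close>
    have shape: "(v \<notin> u \<and> u \<in> boundary_tris B \<and> u \<noteq> t) \<or> (u = insert v e \<and> e \<subseteq> t)"
      if u: "u \<in> boundary_tris ?B'" "e \<subseteq> u" for u
    proof (cases "v \<in> u")
      case True
      then have "card u = 3" "u \<subseteq> insert v t" using u bd boundary_tri_in_tet[of u B] glue(3) by blast+
      moreover have "finite e" using glue.prems(1) by (intro card_ge_0_finite) simp
      then have "card (insert v e) = 3" using False glue.prems(1) by simp
      ultimately have "u = insert v e" using True u(2) card3_subset_eq[of "insert v e" u] by auto
      then show ?thesis using \<open>u \<subseteq> insert v t\<close> False u(2) by auto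
    qed (use u bd in blast)
    define \<phi> where "\<phi> u = (if v \<in> u then t else u)" for u
    have \<phi>: "\<phi> u \<in> boundary_tris B \<and> e \<subseteq> \<phi> u" if "u \<in> boundary_tris ?B'" "e \<subseteq> u" for u
      using shape[OF that] glue(2) that(2) by (auto simp: \<phi>_def)
    have \<phi>_inj: "u = u'" if "u \<in> boundary_tris ?B'" "e \<subseteq> u" "u' \<in> boundary_tris ?B'" "e \<subseteq> u'"
      "\<phi> u = \<phi> u'" for u u'
      using shape[OF that(1,2)] shape[OF that(3,4)] that(5) by (auto simp: \<phi>_def split: if_splits)
    have "\<phi> u1 = \<phi> u2 \<or> \<phi> u1 = \<phi> u3 \<or> \<phi> u2 = \<phi> u3"
      using glue.IH[OF glue.prems(1)] \<phi> glue.prems by blast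
    then show ?thesis using \<phi>_inj glue.prems by blast
  qed
qed

section \<open>Stacked spheres as boundaries\<close>

lemma cofaces_count_image:
  assumes inj: "inj_on f (\<Union>B)" and u: "u \<subseteq> \<Union>B"
  shows "cofaces_count ((`) f ` B) (f ` u) = cofaces_count B u"
proof -
  have sub_iff: "f ` u \<subseteq> f ` s \<longleftrightarrow> u \<subseteq> s" if "s \<in> B" for s
  proof -
    have s: "s \<subseteq> \<Union>B" using that by blast
    have "f x \<in> f ` s \<longleftrightarrow> x \<in> s" if "x \<in> u" for x
    proof -
      have "x \<in> \<Union>B" using u that by blast
      then show ?thesis using inj_on_image_mem_iff[OF inj _ s] by blast
    qed
    then show ?thesis by blast
  qed
  have "{s' \<in> (`) f ` B. f ` u \<subseteq> s'} = (`) f ` {s \<in> B. u \<subseteq> s}"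
    using sub_iff by auto
  moreover have "inj_on ((`) f) {s \<in> B. u \<subseteq> s}"
    by (rule inj_onI) (use inj_on_image_eq_iff[OF inj] in auto)
  ultimately show ?thesis unfolding cofaces_count_def by (simp add: card_image)
qed

lemma boundary_tris_image:
  assumes inj: "inj_on f (\<Union>B)"
  shows "boundary_tris ((`) f ` B) = (`) f ` boundary_tris B"
proof -
  have iff: "f ` u \<in> boundary_tris ((`) f ` B) \<longleftrightarrow> u \<in> boundary_tris B" if "u \<subseteq> \<Union>B" for u
  proof -
    have "card (f ` u) = card u" using inj_on_subset[OF inj that] card_image by blast
    then show ?thesis using cofaces_count_image[OF inj that] by (simp add: boundary_tris_iff)
  qed
  show ?thesis
  proof (intro set_eqI iffI)
    fix u' assume u': "u' \<in> boundary_tris ((`) f ` B)"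
    then obtain s where "s \<in> B" "u' \<subseteq> f ` s" using boundary_tri_in_tet[OF u'] by blast
    then obtain u where u: "u \<subseteq> s" "u' = f ` u" by (auto simp: subset_image_iff)
    have "u \<subseteq> \<Union>B" using u(1) \<open>s \<in> B\<close> by blast
    then have "u \<in> boundary_tris B" using iff u' u(2) by simp
    then show "u' \<in> (`) f ` boundary_tris B" using u(2) by blast
  next
    fix u' assume "u' \<in> (`) f ` boundary_tris B"
    then obtain u where u: "u \<in> boundary_tris B" "u' = f ` u" by blast
    then have "u \<subseteq> \<Union>B" using boundary_tri_in_tet[OF u(1)] by blast
    then show "u' \<in> boundary_tris ((`) f ` B)" using iff u by simp
  qed
qed

lemma stacked_ball_image: "stacked_ball B \<Longrightarrow> inj_on f (\<Union>B) \<Longrightarrow> stacked_ball ((`) f ` B)"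
proof (induction rule: stacked_ball.induct)
  case (single s)
  have "card (f ` s) = 4" using single card_image by (metis ccpo_Sup_singleton)
  then show ?case by (simp add: stacked_ball.single)
next
  case (glue B t v)
  have inj: "inj_on f (\<Union>B)" using glue.prems by (rule inj_on_subset) auto
  have "f ` t \<in> boundary_tris ((`) f ` B)" using boundary_tris_image[OF inj] glue(2) by blast
  moreover have "f v \<notin> \<Union>((`) f ` B)"
    using inj_on_image_mem_iff[OF glue.prems, of v "\<Union>B"] glue(3) by auto
  ultimately show ?case using stacked_ball.glue[OF glue.IH[OF inj]] by simp
qed

lemma stacked_sphere_iff: "stacked_sphere S \<longleftrightarrow> (\<exists>B. stacked_ball B \<and> boundary_tris B = S)"
proof
  assume "stacked_sphere S"
  then obtain B :: "'a set set" and f where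
    B: "stacked_ball B" "inj_on f (\<Union>B)" "(`) f ` boundary_tris B = S"
    unfolding stacked_sphere_def by blast
  then show "\<exists>B. stacked_ball B \<and> boundary_tris B = S"
    using stacked_ball_image[OF B(1,2)] boundary_tris_image[OF B(2)] by auto
next
  assume "\<exists>B. stacked_ball B \<and> boundary_tris B = S"
  then obtain B where "stacked_ball B" "boundary_tris B = S" by blast
  then show "stacked_sphere S" unfolding stacked_sphere_def by (intro exI[of _ B] exI[of _ id]) auto
qed

lemma tet_edge_iff_boundary_edge:
  assumes "stacked_ball B" "card e = 2"
  shows "(\<exists>s\<in>B. e \<subseteq> s) \<longleftrightarrow> (\<exists>u\<in>boundary_tris B. e \<subseteq> u)"
proof
  assume "\<exists>s\<in>B. e \<subseteq> s"
  then obtain s where "s \<in> B" "e \<subseteq> s" by blast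
  then show "\<exists>u\<in>boundary_tris B. e \<subseteq> u"
    using stacked_ball_edge_in_boundary_tri[OF assms(1) _ _ assms(2)] by blast
next
  assume "\<exists>u\<in>boundary_tris B. e \<subseteq> u"
  then obtain u where "u \<in> boundary_tris B" "e \<subseteq> u" by blast
  moreover obtain s where "s \<in> B" "u \<subseteq> s" using boundary_tri_in_tet[OF \<open>u \<in> _\<close>] by blast
  ultimately show "\<exists>s\<in>B. e \<subseteq> s" by blast
qed

lemma edges2_boundary_tris:
  assumes "stacked_ball B"
  shows "edges2 (boundary_tris B) = {e. card e = 2 \<and> (\<exists>s\<in>B. e \<subseteq> s)}"
  using tet_edge_iff_boundary_edge[OF assms] by (auto simp: edges2_def)

lemma clique_tets_boundary_tris:
  assumes "stacked_ball B"
  shows "clique_tets (boundary_tris B) = B"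
proof (intro set_eqI iffI)
  fix K assume "K \<in> clique_tets (boundary_tris B)"
  then have "card K = 4" "\<forall>x\<in>K. \<forall>y\<in>K. x \<noteq> y \<longrightarrow> {x,y} \<in> edges2 (boundary_tris B)"
    by (auto simp: clique_tets_def)
  then show "K \<in> B"
    using stacked_ball_clique_mem[OF assms] by (simp add: edges2_boundary_tris[OF assms])
next
  fix s assume s: "s \<in> B"
  have "{x,y} \<in> edges2 (boundary_tris B)" if "x \<in> s" "y \<in> s" "x \<noteq> y" for x y
    using s that by (auto simp: edges2_boundary_tris[OF assms])
  then show "s \<in> clique_tets (boundary_tris B)"
    using stacked_ball_card_tet[OF assms s] by (simp add: clique_tets_def)
qed

lemma tet_of_boundary_tris:
  assumes "stacked_ball B" "u \<in> boundary_tris B" "s \<in> B" "u \<subseteq> s"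
  shows "tet_of (boundary_tris B) u = s"
  unfolding tet_of_def clique_tets_boundary_tris[OF assms(1)]
  by (rule the_equality) (use assms(3,4) boundary_tri_tet_unique[OF assms(2)] in auto)

lemma boundary_tri_tet_apex:
  assumes st: "stacked_ball B" and u: "{a,b,c} \<in> boundary_tris B" and "card {a,b,c} = 3"
  obtains x where "x \<notin> {a,b,c}" "{a,b,c,x} \<in> B" "tet_of (boundary_tris B) {a,b,c} = {a,b,c,x}"
proof -
  obtain s where s: "s \<in> B" "{a,b,c} \<subseteq> s" using boundary_tri_in_tet[OF u] by blast
  obtain x where x: "x \<notin> {a,b,c}" "s = insert x {a,b,c}"
    using card4_eq_insert_of_card3[OF stacked_ball_card_tet[OF st s(1)] s(2) assms(3)] .
  then have "s = {a,b,c,x}" by auto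
  then show ?thesis using that x(1) s tet_of_boundary_tris[OF st u s] by simp
qed

section \<open>Retriangulating a stacked ball\<close>

lemma cofaces_count_bisect_tet:
  assumes "finite B" "{a,b,d,x} \<in> B" "c \<notin> \<Union>B" "distinct [a,b,c,d,x]"
    and "card u = 3" "c \<notin> u" "u \<noteq> {a,b,d}" "u \<noteq> {a,b,x}"
  shows "cofaces_count (insert {a,c,d,x} (insert {b,c,d,x} (B - {{a,b,d,x}}))) u = cofaces_count B u"
proof -
  have new: "{a,c,d,x} \<notin> insert {b,c,d,x} (B - {{a,b,d,x}})" "{b,c,d,x} \<notin> B - {{a,b,d,x}}"
    using assms(3,4) by auto
  have "cofaces_count (insert {a,c,d,x} (insert {b,c,d,x} (B - {{a,b,d,x}}))) u
      + (if u \<subseteq> {a,b,d,x} then 1 else 0)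
      = cofaces_count B u + (if u \<subseteq> {a,c,d,x} then 1 else 0) + (if u \<subseteq> {b,c,d,x} then 1 else 0)"
    using cofaces_count_remove[OF assms(1,2), of u] cofaces_count_insert[OF _ new(1), of u]
      cofaces_count_insert[OF _ new(2), of u] assms(1) by simp
  moreover have "(if u \<subseteq> {a,b,d,x} then 1 else 0)
      = (if u \<subseteq> {a,c,d,x} then 1 else 0) + (if u \<subseteq> {b,c,d,x} then 1 else (0::nat))"
  proof (cases "u \<subseteq> {a,b,d,x}")
    case True
    then have "u = {a,d,x} \<or> u = {b,d,x}"
      using card3_subset_card4[of a b d x u] assms(4,5,7,8) by auto
    then show ?thesis using assms(4) by auto
  qed (use assms(6) in auto)
  ultimately show ?thesis by linarith
qed

lemma flip_tets_incidence:
  assumes dist: "distinct [a,b,c,d,x]" and u: "card u = 3" "\<not> {c,d} \<subseteq> u"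
    "u \<noteq> {a,b,c}" "u \<noteq> {a,b,d}" "u \<noteq> {a,b,x}"
  shows "(if u \<subseteq> {a,b,c,x} then 1 else 0) + (if u \<subseteq> {a,b,d,x} then 1 else 0)
       = (if u \<subseteq> {a,c,d,x} then 1 else 0) + (if u \<subseteq> {b,c,d,x} then (1::nat) else 0)"
proof -
  have d4: "distinct [a,b,c,x]" "distinct [a,b,d,x]" "distinct [a,c,d,x]" "distinct [b,c,d,x]"
    using dist by auto
  show ?thesis
  proof (cases "u \<subseteq> {a,b,c,x}")
    case True
    then have "u = {a,c,x} \<or> u = {b,c,x}" using card3_subset_card4[OF d4(1) u(1)] u by blast
    then show ?thesis using dist by auto
  next
    case not_abcx: False
    show ?thesis
    proof (cases "u \<subseteq> {a,b,d,x}")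
      case True
      then have "u = {a,d,x} \<or> u = {b,d,x}" using card3_subset_card4[OF d4(2) u(1)] u by blast
      then show ?thesis using dist by auto
    next
      case not_abdx: False
      have "\<not> u \<subseteq> {a,c,d,x}"
        using card3_subset_card4[OF d4(3) u(1)] u(2) not_abcx not_abdx by auto
      moreover have "\<not> u \<subseteq> {b,c,d,x}"
        using card3_subset_card4[OF d4(4) u(1)] u(2) not_abcx not_abdx by auto
      ultimately show ?thesis using not_abcx not_abdx by simp
    qed
  qed
qed

lemma cofaces_count_flip_tets:
  assumes fin: "finite B" and tets: "{a,b,c,x} \<in> B" "{a,b,d,x} \<in> B"
    and dist: "distinct [a,b,c,d,x]" and no_cd: "\<forall>s\<in>B. \<not> {c,d} \<subseteq> s"
  shows "cofaces_count (insert {a,c,d,x} (insert {b,c,d,x} (B - {{a,b,c,x},{a,b,d,x}}))) u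
      + (if u \<subseteq> {a,b,c,x} then 1 else 0) + (if u \<subseteq> {a,b,d,x} then 1 else 0)
    = cofaces_count B u + (if u \<subseteq> {a,c,d,x} then 1 else 0) + (if u \<subseteq> {b,c,d,x} then 1 else 0)"
proof -
  let ?C = "B - {{a,b,c,x},{a,b,d,x}}"
  have ne: "{a,b,c,x} \<noteq> {a,b,d,x}" "{a,c,d,x} \<noteq> {b,c,d,x}"
  proof
    assume "{a,b,c,x} = {a,b,d,x}"
    then have "c \<in> {a,b,d,x}" by blast
    then show False using dist by auto
  next
    show "{a,c,d,x} \<noteq> {b,c,d,x}"
    proof
      assume "{a,c,d,x} = {b,c,d,x}"
      then have "a \<in> {b,c,d,x}" by blast
      then show False using dist by auto
    qed
  qed
  have "{c,d} \<subseteq> {a,c,d,x}" "{c,d} \<subseteq> {b,c,d,x}" by auto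
  then have "{a,c,d,x} \<notin> B" "{b,c,d,x} \<notin> B" using no_cd by blast+
  then have new: "{a,c,d,x} \<notin> insert {b,c,d,x} ?C" "{b,c,d,x} \<notin> ?C" using ne(2) by simp_all
  have C: "?C = B - {{a,b,c,x}} - {{a,b,d,x}}" by auto
  have abdx: "{a,b,d,x} \<in> B - {{a,b,c,x}}" using tets(2) ne(1) by simp
  show ?thesis
    using cofaces_count_remove[OF fin tets(1), of u] cofaces_count_remove[OF _ abdx, of u]
      cofaces_count_insert[OF _ new(1), of u] cofaces_count_insert[OF _ new(2), of u] fin C by simp
qed

lemma cofaces_count_flip_tets_eq:
  assumes "finite B" "{a,b,c,x} \<in> B" "{a,b,d,x} \<in> B" "distinct [a,b,c,d,x]" "\<forall>s\<in>B. \<not> {c,d} \<subseteq> s"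
    and "card u = 3" "\<not> {c,d} \<subseteq> u" "u \<noteq> {a,b,c}" "u \<noteq> {a,b,d}" "u \<noteq> {a,b,x}"
  shows "cofaces_count (insert {a,c,d,x} (insert {b,c,d,x} (B - {{a,b,c,x},{a,b,d,x}}))) u
    = cofaces_count B u"
  using cofaces_count_flip_tets[OF assms(1-5), of u] flip_tets_incidence[OF assms(4,6-)] by simp

lemma stacked_ball_glue_twice:
  assumes st: "stacked_ball B" and t: "{b,d,x} \<in> boundary_tris B"
    and fresh: "c \<notin> \<Union>B" "a \<notin> \<Union>B" and dist: "distinct [a,b,c,d,x]"
  shows "stacked_ball (insert {a,c,d,x} (insert {b,c,d,x} B))"
proof -
  have st1: "stacked_ball (insert (insert c {b,d,x}) B)" using stacked_ball.glue[OF st t fresh(1)] .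
  have "{c,d,x} \<in> boundary_tris (insert (insert c {b,d,x}) B)"
    using boundary_tris_glue[OF stacked_ball_finite[OF st] t fresh(1), of "{c,d,x}"] dist by auto
  moreover have "a \<notin> \<Union>(insert (insert c {b,d,x}) B)" using fresh(2) dist by auto
  ultimately have "stacked_ball (insert (insert a {c,d,x}) (insert (insert c {b,d,x}) B))"
    using stacked_ball.glue[OF st1] by blast
  moreover have "insert c {b,d,x} = {b,c,d,x}" "insert a {c,d,x} = {a,c,d,x}" by auto
  ultimately show ?thesis by simp
qed

text \<open>If \<open>abdx\<close> was glued last, its new vertex is \<open>a\<close> or \<open>b\<close>, since the faces \<open>abd, abx\<close> are
  still on the boundary; gluing \<open>bcdx\<close> and then \<open>acdx\<close> instead gives the same complex.\<close>

lemma stacked_ball_bisect_tet: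
  "stacked_ball B \<Longrightarrow> {a,b,d,x} \<in> B \<Longrightarrow> distinct [a,b,c,d,x] \<Longrightarrow> {a,b,d} \<in> boundary_tris B
   \<Longrightarrow> {a,b,x} \<in> boundary_tris B \<Longrightarrow> c \<notin> \<Union>B
   \<Longrightarrow> stacked_ball (insert {a,c,d,x} (insert {b,c,d,x} (B - {{a,b,d,x}})))"
proof (induction rule: stacked_ball.induct)
  case (single s)
  have "card {b,c,d,x} = 4" using single by auto
  then have st: "stacked_ball {{b,c,d,x}}" by (rule stacked_ball.single)
  have "{s' \<in> {{b,c,d,x}}. {c,d,x} \<subseteq> s'} = {{b,c,d,x}}" by auto
  then have "{c,d,x} \<in> boundary_tris {{b,c,d,x}}" using single by (simp add: boundary_tris_def)
  moreover have "a \<notin> \<Union>{{b,c,d,x}}" using single by auto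
  ultimately have "stacked_ball (insert (insert a {c,d,x}) {{b,c,d,x}})" by (rule stacked_ball.glue[OF st])
  moreover have "insert a {c,d,x} = {a,c,d,x}" "{s} - {{a,b,d,x}} = {}" using single by auto
  ultimately show ?case by simp
next
  case (glue B1 t v)
  let ?s = "{a,b,d,x}"
  let ?N = "insert v t"
  have c1: "c \<notin> \<Union>B1" using glue.prems(5) by auto
  show ?case
  proof (cases "?N = ?s")
    case False
    let ?B1' = "insert {a,c,d,x} (insert {b,c,d,x} (B1 - {?s}))"
    have s: "?s \<in> B1" using glue.prems(1) False by simp
    have bd1: "{a,b,d} \<in> boundary_tris B1" "{a,b,x} \<in> boundary_tris B1"
      using boundary_tris_subset[OF glue.prems(3) _ s] boundary_tris_subset[OF glue.prems(4) _ s] by auto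
    have t_ne: "t \<noteq> {a,b,d}" "t \<noteq> {a,b,x}"
      using boundary_tri_tet_unique[OF glue.prems(3), of ?N ?s] boundary_tri_tet_unique[OF glue.prems(4), of ?N ?s]
        s False by auto
    have "c \<notin> t" using boundary_tri_in_tet[OF glue(2)] c1 by auto
    then have "cofaces_count ?B1' t = cofaces_count B1 t"
      using cofaces_count_bisect_tet[OF stacked_ball_finite[OF glue(1)] s c1 glue.prems(2)] t_ne
        glue_nondegenerate[OF glue(2,3)] by blast
    then have "t \<in> boundary_tris ?B1'" using glue(2) by (simp add: boundary_tris_iff)
    moreover have "v \<notin> \<Union>?B1'" using glue(3) glue.prems(5) s by auto
    ultimately have "stacked_ball (insert ?N ?B1')"
      using stacked_ball.glue[OF glue.IH[OF s glue.prems(2) bd1 c1]] by blast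
    moreover have "insert ?N ?B1' = insert {a,c,d,x} (insert {b,c,d,x} (insert ?N B1 - {?s}))"
      using False by auto
    ultimately show ?thesis by simp
  next
    case True
    have rest: "insert ?N B1 - {?s} = B1" using True glue(3) by auto
    have t: "t = ?s - {v}" using True glue_nondegenerate[OF glue(2,3)] by auto
    have "t \<notin> boundary_tris (insert ?N B1)"
      using boundary_tris_glue[OF stacked_ball_finite[OF glue(1)] glue(2,3), of t]
        glue_nondegenerate[OF glue(2,3)] by auto
    then have t_ne: "t \<noteq> {a,b,d}" "t \<noteq> {a,b,x}" using glue.prems(3,4) by auto
    have "v \<in> ?s" using True by auto
    moreover have "?s - {a} = {b,d,x}" "?s - {b} = {a,d,x}" "?s - {d} = {a,b,x}" "?s - {x} = {a,b,d}"
      using glue.prems(2) by auto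
    ultimately consider "v = a" "t = {b,d,x}" | "v = b" "t = {a,d,x}" using t t_ne by auto
    then show ?thesis
    proof cases
      case 1
      then show ?thesis using stacked_ball_glue_twice[OF glue(1) _ c1 _ glue.prems(2)] glue(2,3) rest by simp
    next
      case 2
      moreover have "distinct [b,a,c,d,x]" using glue.prems(2) by auto
      ultimately have "stacked_ball (insert {b,c,d,x} (insert {a,c,d,x} B1))"
        using stacked_ball_glue_twice[of B1 a d x c b] glue(1,2,3) c1 by simp
      then show ?thesis using rest by (simp add: insert_commute)
    qed
  qed
qed

lemma stacked_ball_flip_tets:
  "stacked_ball B \<Longrightarrow> {a,b,c,x} \<in> B \<Longrightarrow> {a,b,d,x} \<in> B \<Longrightarrow> distinct [a,b,c,d,x]
   \<Longrightarrow> {a,b,c} \<in> boundary_tris B \<Longrightarrow> {a,b,d} \<in> boundary_tris B \<Longrightarrow> \<forall>s\<in>B. \<not> {c,d} \<subseteq> s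
   \<Longrightarrow> stacked_ball (insert {a,c,d,x} (insert {b,c,d,x} (B - {{a,b,c,x},{a,b,d,x}})))"
proof (induction rule: stacked_ball.induct)
  case (single s)
  then show ?case by auto
next
  case (glue B1 t v)
  let ?s1 = "{a,b,c,x}" and ?s2 = "{a,b,d,x}" and ?N = "insert v t"
  have v_t: "v \<notin> t" using glue_nondegenerate[OF glue(2,3)] by blast
  have bd_old: "u \<in> boundary_tris B1" if "u \<in> boundary_tris (insert ?N B1)" "s \<in> B1" "u \<subseteq> s" for u s
    using boundary_tris_subset[OF that(1) _ that(2,3)] by blast
  consider (old) "?N \<noteq> ?s1" "?N \<noteq> ?s2" | (s1) "?N = ?s1" | (s2) "?N = ?s2" by blast
  then show ?case
  proof cases
    case old
    let ?B1' = "insert {a,c,d,x} (insert {b,c,d,x} (B1 - {?s1,?s2}))"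
    have s: "?s1 \<in> B1" "?s2 \<in> B1" using glue.prems(1,2) old by auto
    have no_cd: "\<forall>s\<in>B1. \<not> {c,d} \<subseteq> s" using glue.prems(6) by auto
    have t_ne: "t \<noteq> {a,b,c}" "t \<noteq> {a,b,d}" "t \<noteq> {a,b,x}"
      using boundary_tri_tet_unique[OF glue.prems(4), of ?N ?s1] boundary_tri_tet_unique[OF glue.prems(5), of ?N ?s2]
        boundary_tri_tet_unique[OF glue(2) s] glue.prems(3) s old by auto
    have "\<not> {c,d} \<subseteq> t" using boundary_tri_in_tet[OF glue(2)] no_cd by auto
    then have "cofaces_count ?B1' t = cofaces_count B1 t"
      using cofaces_count_flip_tets_eq[OF stacked_ball_finite[OF glue(1)] s glue.prems(3) no_cd] t_ne
        glue_nondegenerate[OF glue(2,3)] by blast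
    then have t_bd: "t \<in> boundary_tris ?B1'" using glue(2) by (simp add: boundary_tris_iff)
    have v_fresh: "v \<notin> \<Union>?B1'" using glue(3) s by auto
    have "stacked_ball ?B1'"
      using glue.IH[OF s glue.prems(3) bd_old[OF glue.prems(4) s(1)] bd_old[OF glue.prems(5) s(2)] no_cd]
      by simp
    then have "stacked_ball (insert ?N ?B1')" using stacked_ball.glue[OF _ t_bd v_fresh] by blast
    moreover have "insert ?N B1 - {?s1,?s2} = insert ?N (B1 - {?s1,?s2})" using old by auto
    ultimately show ?thesis by (simp add: insert_commute)
  next
    case s1
    have s2: "?s2 \<in> B1" using glue.prems(2,3) s1 by auto
    have "v \<in> ?s1" "v \<notin> ?s2" using s1 glue(3) s2 by auto
    then have v: "v = c" by auto
    then have "t = ?s1 - {c}" using s1 v_t by auto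
    also have "\<dots> = {a,b,x}" using glue.prems(3) by auto
    finally have "t = {a,b,x}" .
    then have "stacked_ball (insert {a,c,d,x} (insert {b,c,d,x} (B1 - {?s2})))"
      using stacked_ball_bisect_tet[OF glue(1) s2 glue.prems(3) bd_old[OF glue.prems(5) s2]] glue(2,3) v
      by simp
    moreover have "insert ?N B1 - {?s1,?s2} = B1 - {?s2}" using s1 glue(3) by auto
    ultimately show ?thesis by simp
  next
    case s2
    have s1: "?s1 \<in> B1" using glue.prems(1,3) s2 by auto
    have "v \<in> ?s2" "v \<notin> ?s1" using s2 glue(3) s1 by auto
    then have v: "v = d" by auto
    then have "t = ?s2 - {d}" using s2 v_t by auto
    also have "\<dots> = {a,b,x}" using glue.prems(3) by auto
    finally have "t = {a,b,x}" .
    moreover have "distinct [a,b,d,c,x]" using glue.prems(3) by auto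
    ultimately have "stacked_ball (insert {a,d,c,x} (insert {b,d,c,x} (B1 - {?s1})))"
      using stacked_ball_bisect_tet[OF glue(1) s1 _ bd_old[OF glue.prems(4) s1]] glue(2,3) v
      by simp
    moreover have "insert ?N B1 - {?s1,?s2} = B1 - {?s1}" using s2 glue(3) by auto
    moreover have "{a,d,c,x} = {a,c,d,x}" "{b,d,c,x} = {b,c,d,x}" by auto
    ultimately show ?thesis by simp
  qed
qed

lemma boundary_tris_flip_tets:
  assumes st: "stacked_ball B" and tets: "{a,b,c,x} \<in> B" "{a,b,d,x} \<in> B"
    and dist: "distinct [a,b,c,d,x]" and bd: "{a,b,c} \<in> boundary_tris B" "{a,b,d} \<in> boundary_tris B"
    and no_cd: "\<forall>s\<in>B. \<not> {c,d} \<subseteq> s"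
  shows "boundary_tris (insert {a,c,d,x} (insert {b,c,d,x} (B - {{a,b,c,x},{a,b,d,x}})))
     = (boundary_tris B - {{a,b,c},{a,b,d}}) \<union> {{a,c,d},{b,c,d}}"
proof (rule set_eqI)
  fix u
  let ?B' = "insert {a,c,d,x} (insert {b,c,d,x} (B - {{a,b,c,x},{a,b,d,x}}))"
  note count = cofaces_count_flip_tets[OF stacked_ball_finite[OF st] tets dist no_cd, of u]
  have new_tris: "{a,c,d} \<noteq> {a,b,c}" "{a,c,d} \<noteq> {a,b,d}" "{b,c,d} \<noteq> {a,b,c}" "{b,c,d} \<noteq> {a,b,d}"
    "card {a,c,d} = 3" "card {b,c,d} = 3"
    using dist by (auto simp: insert_eq_iff)
  show "u \<in> boundary_tris ?B' \<longleftrightarrow> u \<in> (boundary_tris B - {{a,b,c},{a,b,d}}) \<union> {{a,c,d},{b,c,d}}"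
  proof (cases "card u = 3")
    case False
    then show ?thesis using new_tris by (auto simp: boundary_tris_iff)
  next
    case u: True
    consider (abc) "u = {a,b,c}" | (abd) "u = {a,b,d}" | (abx) "u = {a,b,x}" | (cd) "{c,d} \<subseteq> u"
      | (other) "u \<noteq> {a,b,c}" "u \<noteq> {a,b,d}" "u \<noteq> {a,b,x}" "\<not> {c,d} \<subseteq> u" by blast
    then show ?thesis
    proof cases
      case abc
      then have "cofaces_count ?B' u = 0" using count bd(1) dist by (auto simp: boundary_tris_iff)
      then show ?thesis using abc new_tris by (auto simp: boundary_tris_iff)
    next
      case abd
      then have "cofaces_count ?B' u = 0" using count bd(2) dist by (auto simp: boundary_tris_iff)
      then show ?thesis using abd new_tris by (auto simp: boundary_tris_iff)
    next
      case abx
      then have "cofaces_count ?B' u = 0" "cofaces_count B u = 2"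
        using count stacked_ball_cofaces_count_le_2[OF st u] dist by auto
      moreover have "u \<noteq> {a,c,d}" "u \<noteq> {b,c,d}" using abx dist by (auto simp: insert_eq_iff)
      ultimately show ?thesis by (auto simp: boundary_tris_iff)
    next
      case cd
      have d4: "distinct [a,c,d,x]" "distinct [b,c,d,x]" using dist by auto
      have "cofaces_count B u = 0" using no_cd cd by (intro cofaces_count_eq_0) auto
      moreover have "u \<subseteq> {a,c,d,x} \<longleftrightarrow> u = {a,c,d} \<or> u = {c,d,x}"
        using card3_subset_card4[OF d4(1) u] cd dist by auto
      moreover have "u \<subseteq> {b,c,d,x} \<longleftrightarrow> u = {b,c,d} \<or> u = {c,d,x}"
        using card3_subset_card4[OF d4(2) u] cd dist by auto
      moreover have "{a,c,d} \<noteq> {c,d,x}" "{b,c,d} \<noteq> {c,d,x}" "{a,c,d} \<noteq> {b,c,d}"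
        using dist by (auto simp: insert_eq_iff)
      moreover have "\<not> u \<subseteq> {a,b,c,x}" "\<not> u \<subseteq> {a,b,d,x}" using cd dist by auto
      ultimately show ?thesis using count u by (auto simp: boundary_tris_iff)
    next
      case other
      then have "cofaces_count ?B' u = cofaces_count B u"
        using cofaces_count_flip_tets_eq[OF stacked_ball_finite[OF st] tets dist no_cd u] by blast
      moreover have "u \<noteq> {a,c,d}" "u \<noteq> {b,c,d}" using other(4) by auto
      ultimately show ?thesis using other u by (auto simp: boundary_tris_iff)
    qed
  qed
qed

section \<open>Flipping an edge of a stacked sphere\<close>

lemma boundary_tri_apex_unique:
  assumes st: "stacked_ball B" and u: "{a,b,d} \<in> boundary_tris B" and s: "{a,b,d,y} \<in> B"
    and card: "card {a,b,d,x} = 4"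
    and edges: "\<exists>s\<in>B. {a,x} \<subseteq> s" "\<exists>s\<in>B. {b,x} \<subseteq> s" "\<exists>s\<in>B. {d,x} \<subseteq> s"
  shows "x = y"
proof -
  have old: "\<exists>s\<in>B. p \<in> s \<and> q \<in> s" if "p \<in> {a,b,d}" "q \<in> {a,b,d}" for p q
    using that by (intro bexI[OF _ s]) auto
  have new: "\<exists>s\<in>B. p \<in> s \<and> x \<in> s" if "p \<in> {a,b,d}" for p
  proof -
    have "\<exists>s\<in>B. {p,x} \<subseteq> s" using that edges by blast
    then show ?thesis by simp
  qed
  have "\<exists>s\<in>B. {p,q} \<subseteq> s" if "p \<in> {a,b,d,x}" "q \<in> {a,b,d,x}" "p \<noteq> q" for p q
  proof (cases "p = x \<or> q = x")
    case True
    then show ?thesis using new[of q] new[of p] that by auto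
  qed (use old[of p q] that in auto)
  then have "\<forall>p\<in>{a,b,d,x}. \<forall>q\<in>{a,b,d,x}. p \<noteq> q \<longrightarrow> (\<exists>s\<in>B. {p,q} \<subseteq> s)" by blast
  then have "{a,b,d,x} \<in> B" by (rule stacked_ball_clique_mem[OF st card])
  then have "{a,b,d,x} = {a,b,d,y}" using boundary_tri_tet_unique[OF u _ s] by auto
  moreover have "x \<notin> {a,b,d}" using card by (auto simp: card_insert_if split: if_splits)
  ultimately show ?thesis by auto
qed

lemma dual_adj_iff_common_apex:
  assumes "{a,b,c} \<in> boundary_tris B" "{a,b,d} \<in> boundary_tris B" "{a,b,c,x} \<in> B" "{a,b,d,y} \<in> B"
    and "distinct [a,b,c,d]" "x \<notin> {a,b,c}" "y \<notin> {a,b,d}"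
  shows "dual_adj B {a,b,c,x} {a,b,d,y} \<longleftrightarrow> x = y"
proof
  assume adj: "dual_adj B {a,b,c,x} {a,b,d,y}"
  then have ne: "{a,b,c,x} \<noteq> {a,b,d,y}" by (simp add: dual_adj_def)
  have apexes: "d \<notin> {a,b,c,x}" "c \<notin> {a,b,d,y}"
    using boundary_tri_tet_unique[OF assms(1) assms(3,4)] boundary_tri_tet_unique[OF assms(2) assms(3,4)] ne
    by auto
  show "x = y"
  proof (rule ccontr)
    assume "x \<noteq> y"
    then have "{a,b,c,x} \<inter> {a,b,d,y} \<subseteq> {a,b}" using apexes by blast
    then have "card ({a,b,c,x} \<inter> {a,b,d,y}) \<le> card {a,b}" by (intro card_mono) auto
    then show False using adj assms(5) by (simp add: dual_adj_def)
  qed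
next
  assume "x = y"
  then have "{a,b,c,x} \<inter> {a,b,d,y} = {a,b,x}" "c \<notin> {a,b,d,y}" using assms(5-7) by auto
  moreover have "card {a,b,x} = 3" using assms(5,6) by auto
  ultimately show "dual_adj B {a,b,c,x} {a,b,d,y}" using assms(3,4) by (auto simp: dual_adj_def)
qed

lemma flip_stacked_of_common_apex:
  assumes st: "stacked_ball B" and bd: "{a,b,c} \<in> boundary_tris B" "{a,b,d} \<in> boundary_tris B"
    and tets: "{a,b,c,x} \<in> B" "{a,b,d,x} \<in> B" and dist: "distinct [a,b,c,d,x]"
  shows "{c,d} \<notin> edges2 (boundary_tris B) \<and> stacked_sphere (edge_flip (boundary_tris B) a b c d)"
proof
  have no_cd: "\<forall>s\<in>B. \<not> {c,d} \<subseteq> s"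
  proof (intro ballI notI)
    fix s assume "s \<in> B" "{c,d} \<subseteq> s"
    then have "\<exists>s\<in>B. {c,d} \<subseteq> s" by blast
    moreover have "\<exists>s\<in>B. {a,d} \<subseteq> s" "\<exists>s\<in>B. {b,d} \<subseteq> s"
      by (intro bexI[OF _ tets(2)]; auto)+
    moreover have "card {a,b,c,d} = 4" using dist by simp
    ultimately have "d = x" using boundary_tri_apex_unique[OF st bd(1) tets(1)] by blast
    then show False using dist by simp
  qed
  then show "{c,d} \<notin> edges2 (boundary_tris B)" by (simp add: edges2_boundary_tris[OF st])
  have "boundary_tris (insert {a,c,d,x} (insert {b,c,d,x} (B - {{a,b,c,x},{a,b,d,x}})))
      = edge_flip (boundary_tris B) a b c d"
    unfolding edge_flip_def by (rule boundary_tris_flip_tets[OF st tets dist bd no_cd])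
  then show "stacked_sphere (edge_flip (boundary_tris B) a b c d)"
    using stacked_ball_flip_tets[OF st tets dist bd no_cd] stacked_sphere_iff by blast
qed

lemma edge_flip_removes_edge:
  assumes st: "stacked_ball B" and bd: "{a,b,c} \<in> boundary_tris B" "{a,b,d} \<in> boundary_tris B"
    and dist: "distinct [a,b,c,d]"
  shows "\<not> (\<exists>u\<in>edge_flip (boundary_tris B) a b c d. {a,b} \<subseteq> u)"
proof
  assume "\<exists>u\<in>edge_flip (boundary_tris B) a b c d. {a,b} \<subseteq> u"
  then obtain u where u: "u \<in> boundary_tris B" "u \<noteq> {a,b,c}" "u \<noteq> {a,b,d}" "{a,b} \<subseteq> u"
    using dist by (auto simp: edge_flip_def)
  have "{a,b,c} \<noteq> {a,b,d}"
  proof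
    assume "{a,b,c} = {a,b,d}"
    then have "c \<in> {a,b,d}" by blast
    then show False using dist by auto
  qed
  moreover have "card {a,b} = 2" using dist by simp
  ultimately show False
    using stacked_ball_edge_in_two_boundary_tris[OF st _ bd u(1)] u by auto
qed

lemma edge_flip_square:
  assumes st: "stacked_ball B" and bd: "{a,b,c} \<in> boundary_tris B" "{a,b,d} \<in> boundary_tris B"
    and tet: "{a,b,c,x} \<in> B" and dist: "distinct [a,b,c,d,x]"
    and stT: "stacked_ball BT" and T: "boundary_tris BT = edge_flip (boundary_tris B) a b c d"
  shows "\<exists>s\<in>BT. {a,x} \<subseteq> s" "\<exists>s\<in>BT. {x,b} \<subseteq> s" "\<exists>s\<in>BT. {b,d} \<subseteq> s" "\<exists>s\<in>BT. {d,a} \<subseteq> s"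
    and "\<not> (\<exists>s\<in>BT. {a,b} \<subseteq> s)"
proof -
  let ?T = "edge_flip (boundary_tris B) a b c d"
  have T_edge: "(\<exists>s\<in>BT. {p,q} \<subseteq> s) \<longleftrightarrow> (\<exists>u\<in>?T. {p,q} \<subseteq> u)" if "p \<noteq> q" for p q
    using tet_edge_iff_boundary_edge[OF stT, of "{p,q}"] that T by simp
  have x_edge: "\<exists>s\<in>BT. {p,x} \<subseteq> s" if "p \<in> {a,b}" for p
  proof -
    have "p \<noteq> x" using that dist by auto
    have "\<exists>s\<in>B. {p,x} \<subseteq> s" using that by (intro bexI[OF _ tet]) auto
    then obtain u where u: "u \<in> boundary_tris B" "{p,x} \<subseteq> u"
      using tet_edge_iff_boundary_edge[OF st, of "{p,x}"] \<open>p \<noteq> x\<close> by auto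
    moreover have "u \<noteq> {a,b,c}" "u \<noteq> {a,b,d}" using u(2) dist by auto
    ultimately have "u \<in> ?T" by (simp add: edge_flip_def)
    then show ?thesis using T_edge[OF \<open>p \<noteq> x\<close>] u(2) by blast
  qed
  have d_edge: "\<exists>s\<in>BT. {p,d} \<subseteq> s" if "p \<in> {a,b}" for p
  proof -
    have "p \<noteq> d" using that dist by auto
    have "{a,c,d} \<in> ?T" "{b,c,d} \<in> ?T" by (simp_all add: edge_flip_def)
    then have "\<exists>u\<in>?T. {p,d} \<subseteq> u" using that by auto
    then show ?thesis using T_edge[OF \<open>p \<noteq> d\<close>] by simp
  qed
  show "\<exists>s\<in>BT. {a,x} \<subseteq> s" "\<exists>s\<in>BT. {b,d} \<subseteq> s" using x_edge d_edge by auto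
  show "\<exists>s\<in>BT. {x,b} \<subseteq> s" "\<exists>s\<in>BT. {d,a} \<subseteq> s"
    using x_edge[of b] d_edge[of a] by (simp_all add: insert_commute)
  show "\<not> (\<exists>s\<in>BT. {a,b} \<subseteq> s)"
    using edge_flip_removes_edge[OF st bd] T_edge[of a b] dist by auto
qed

text \<open>For \<open>x \<noteq> y\<close>, \<open>xd\<close> is not an edge of \<open>B\<close>, since \<open>abdx\<close> would be a second tetrahedron
  on \<open>abd\<close>; nor is it created by the flip. So \<open>a x b d\<close> is a square without diagonals.\<close>

lemma common_apex_of_flip_stacked:
  assumes st: "stacked_ball B" and bd: "{a,b,c} \<in> boundary_tris B" "{a,b,d} \<in> boundary_tris B"
    and tets: "{a,b,c,x} \<in> B" "{a,b,d,y} \<in> B" and dist4: "distinct [a,b,c,d]" and x: "x \<notin> {a,b,c}"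
    and flip: "{c,d} \<notin> edges2 (boundary_tris B) \<and> stacked_sphere (edge_flip (boundary_tris B) a b c d)"
  shows "x = y"
proof (rule ccontr)
  assume "x \<noteq> y"
  have "x \<noteq> d"
  proof
    assume "x = d"
    then have "{c,d} \<subseteq> {a,b,c,x}" "card {c,d} = 2" using dist4 by auto
    then have "{c,d} \<in> edges2 (boundary_tris B)"
      unfolding edges2_boundary_tris[OF st] using tets(1) by blast
    then show False using flip by blast
  qed
  then have dist: "distinct [a,b,c,d,x]" using dist4 x by auto
  obtain BT where stT: "stacked_ball BT" and T: "boundary_tris BT = edge_flip (boundary_tris B) a b c d"
    using flip stacked_sphere_iff by blast
  note square = edge_flip_square[OF st bd tets(1) dist stT T]
  have no_xd: "\<not> (\<exists>s\<in>B. {d,x} \<subseteq> s)"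
  proof
    assume "\<exists>s\<in>B. {d,x} \<subseteq> s"
    moreover have "\<exists>s\<in>B. {a,x} \<subseteq> s" "\<exists>s\<in>B. {b,x} \<subseteq> s" by (intro bexI[OF _ tets(1)]; auto)+
    moreover have "card {a,b,d,x} = 4" using dist by simp
    ultimately show False using boundary_tri_apex_unique[OF st bd(2) tets(2)] \<open>x \<noteq> y\<close> by blast
  qed
  have "\<exists>s\<in>BT. {x,d} \<subseteq> s"
    by (rule stacked_ball_square_chord[OF stT, of a b x d]) (use square dist in auto)
  then obtain u where "u \<in> edge_flip (boundary_tris B) a b c d" "{x,d} \<subseteq> u"
    using tet_edge_iff_boundary_edge[OF stT, of "{x,d}"] T dist by auto
  moreover have "u \<noteq> {a,c,d}" "u \<noteq> {b,c,d}" using \<open>{x,d} \<subseteq> u\<close> dist by auto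
  ultimately have "u \<in> boundary_tris B" "{d,x} \<subseteq> u" by (auto simp: edge_flip_def)
  then show False using no_xd boundary_tri_in_tet[of u B] by blast
qed

theorem theorem4p1:
  fixes S :: "'a set set" and a b c d :: 'a
  assumes "stacked_sphere S"
    and "{a, b, c} \<in> S" and "{a, b, d} \<in> S"
    and "card {a, b, c} = 3" and "card {a, b, d} = 3" and "c \<noteq> d"
  shows "(dual_adj (clique_tets S) (tet_of S {a, b, c}) (tet_of S {a, b, d})
            \<longrightarrow> {c, d} \<notin> edges2 S \<and> stacked_sphere (edge_flip S a b c d))
       \<and> ({c, d} \<notin> edges2 S \<and> stacked_sphere (edge_flip S a b c d)
            \<longrightarrow> dual_adj (clique_tets S) (tet_of S {a, b, c}) (tet_of S {a, b, d}))"
proof -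
  obtain B where st: "stacked_ball B" and S: "boundary_tris B = S"
    using assms(1) stacked_sphere_iff by blast
  have bd: "{a,b,c} \<in> boundary_tris B" "{a,b,d} \<in> boundary_tris B" using assms(2,3) S by simp_all
  have dist: "distinct [a,b,c,d]" using assms(4-6) by (auto simp: card_insert_if split: if_splits)
  obtain x where x: "x \<notin> {a,b,c}" "{a,b,c,x} \<in> B" "tet_of S {a,b,c} = {a,b,c,x}"
    using boundary_tri_tet_apex[OF st bd(1) assms(4)] S by blast
  obtain y where y: "y \<notin> {a,b,d}" "{a,b,d,y} \<in> B" "tet_of S {a,b,d} = {a,b,d,y}"
    using boundary_tri_tet_apex[OF st bd(2) assms(5)] S by blast
  have adj_iff: "dual_adj (clique_tets S) (tet_of S {a,b,c}) (tet_of S {a,b,d}) \<longleftrightarrow> x = y"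
    using dual_adj_iff_common_apex[OF bd x(2) y(2) dist x(1) y(1)] x(3) y(3)
      clique_tets_boundary_tris[OF st] S by simp
  show ?thesis
  proof (rule conjI[OF impI impI])
    assume "dual_adj (clique_tets S) (tet_of S {a,b,c}) (tet_of S {a,b,d})"
    then have "{a,b,d,x} \<in> B" "distinct [a,b,c,d,x]" using adj_iff y dist x(1) by auto
    then show "{c,d} \<notin> edges2 S \<and> stacked_sphere (edge_flip S a b c d)"
      using flip_stacked_of_common_apex[OF st bd x(2)] S by simp
  next
    assume "{c,d} \<notin> edges2 S \<and> stacked_sphere (edge_flip S a b c d)"
    then show "dual_adj (clique_tets S) (tet_of S {a,b,c}) (tet_of S {a,b,d})"
      using common_apex_of_flip_stacked[OF st bd x(2) y(2) dist x(1)] adj_iff S by simp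
  qed
qed

end
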